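(* For every $p,q,r\in(0,\infty)$ there exists a constant $C=C(p,q,r)$ such that for every function $f\in L^p_\mu(\ell^q_\nu(\ell^r_\omega))$ on $X=\mathbb R\times(0,\infty)\times\mathbb R$ there exists $J=J(p,q,r,f)\in\mathbb N$ with $$\|f1_{X_J}\|_{L^p_\mu(\ell^q_\nu(\ell^r_\omega))}\le\|f\|_{L^p_\mu(\ell^q_\nu(\ell^r_\omega))}\le C\|f1_{X_J}\|_{L^p_\mu(\ell^q_\nu(\ell^r_\omega))},$$ where $X_J=(-2^JJ,2^JJ]\times(2^{-J},2^J]\times(-2^JJ,2^JJ]$.
   Context: $\omega$ is Lebesgue measure on $X$. Dyadic intervals $I(m,l)=(2^lm,2^l(m+1)]$; tiles $H(m,l,n)=I(m,l)\times(2^{l-1},2^l]\times I(n,-l)$. Strips $D(m,l)=I(m,l)\times(0,2^l]\times\mathbb R$ form $\mathcal D$, $\sigma(D(m,l))=2^l$. Trees $T(m,l,n)=\bigcup_{l'\le l}\bigcup_{m':\,I(m',l')\subseteq I(m,l)}H(m',l',N(n,l'))$ ($N(n,l')$ the integer with $I(n,-l)\subseteq I(N(n,l'),-l')$) form $\mathcal T$, $\tau(T(m,l,n))=2^l$. $\mu(A)=\inf\{\sum_{S\in\mathcal S'}\sigma(S):\mathcal S'\subseteq\mathcal D,A\subseteq\bigcup\mathcal S'\}$, $\nu$ likewise from $(\mathcal T,\tau)$. For $\omega$-measurable $f$: $\ell^r_\omega(f)(T)=\nu(T)^{-1/r}\|f1_T\|_{L^r(X,\omega)}$ ($T\in\mathcal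 T$); $\|f\|_{L^\infty_\nu(\ell^r_\omega)}=\sup_{T\in\mathcal T}\ell^r_\omega(f)(T)$; $\nu(\ell^r_\omega(f)>\lambda)=\inf\{\nu(B):B\text{ measurable},\|f1_{X\setminus B}\|_{L^\infty_\nu(\ell^r_\omega)}\le\lambda\}$; $\|f\|_{L^q_\nu(\ell^r_\omega)}=(\int_0^\infty q\lambda^{q-1}\nu(\ell^r_\omega(f)>\lambda)d\lambda)^{1/q}$. Then $\ell^q_\nu(\ell^r_\omega)(f)(D)=\mu(D)^{-1/q}\|f1_D\|_{L^q_\nu(\ell^r_\omega)}$ ($D\in\mathcal D$); $\|f\|_{L^\infty_\mu(\ell^q_\nu(\ell^r_\omega))}=\sup_{D\in\mathcal D}\ell^q_\nu(\ell^r_\omega)(f)(D)$; $\mu(\ell^q_\nu(\ell^r_\omega)(f)>\lambda)=\inf\{\mu(B):\|f1_{X\setminus B}\|_{L^\infty_\mu(\ell^q_\nu(\ell^r_\omega))}\le\lambda\}$; $\|f\|_{L^p_\mu(\ell^q_\nu(\ell^r_\omega))}=(\int_0^\infty p\lambda^{p-1}\mu(\ell^q_\nu(\ell^r_\omega)(f)>\lambda)d\lambda)^{1/p}$; membership means finiteness. *)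

theory Defs
  imports "HOL-Analysis.Analysis"
begin

type_synonym pt = "real \<times> real \<times> real"

definition Xsp :: "pt set" where
  "Xsp = {(x, s, \<xi>). 0 < s}"

definition omega :: "pt measure" where
  "omega = lebesgue_on Xsp"

definition epow :: "ennreal \<Rightarrow> real \<Rightarrow> ennreal" where
  "epow x a = (if x = \<infinity> then \<infinity> else ennreal (enn2real x powr a))"

definition restr :: "(pt \<Rightarrow> complex) \<Rightarrow> pt set \<Rightarrow> pt \<Rightarrow> complex" where
  "restr f A = (\<lambda>z. if z \<in> A then f z else 0)"

definition dI :: "int \<Rightarrow> int \<Rightarrow> real set" where
  "dI m l = {2 powr l * m <.. 2 powr l * (m + 1)}"

definition tile :: "int \<Rightarrow> int \<Rightarrow> int \<Rightarrow> pt set" where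
  "tile m l n = {(x, s, \<xi>). x \<in> dI m l \<and> s \<in> {2 powr (l - 1) <.. 2 powr l} \<and> \<xi> \<in> dI n (- l)}"

definition strip :: "int \<Rightarrow> int \<Rightarrow> pt set" where
  "strip m l = {(x, s, \<xi>). x \<in> dI m l \<and> 0 < s \<and> s \<le> 2 powr l}"

text \<open>N(n,l,l') for l' <= l: the integer N with I(n,-l) contained in I(N,-l'),
  namely floor(n / 2^(l-l')).\<close>
definition Nidx :: "int \<Rightarrow> int \<Rightarrow> int \<Rightarrow> int" where
  "Nidx n l l' = n div 2 ^ nat (l - l')"

definition tree :: "int \<Rightarrow> int \<Rightarrow> int \<Rightarrow> pt set" where
  "tree m l n = (\<Union>{tile m' l' (Nidx n l l') | m' l'. l' \<le> l \<and> dI m' l' \<subseteq> dI m l})"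

text \<open>Outer measures generated by (D, sigma) and (T, tau); the (possibly infinite)
  sum over a subcollection is the supremum of its finite partial sums.\<close>
definition mu :: "pt set \<Rightarrow> ennreal" where
  "mu A = (INF S \<in> {S :: (int \<times> int) set. A \<subseteq> (\<Union>(m, l)\<in>S. strip m l)}.
             SUP F \<in> {F. finite F \<and> F \<subseteq> S}. \<Sum>(m, l)\<in>F. ennreal (2 powr l))"

definition nu :: "pt set \<Rightarrow> ennreal" where
  "nu A = (INF S \<in> {S :: (int \<times> int \<times> int) set. A \<subseteq> (\<Union>(m, l, n)\<in>S. tree m l n)}.
             SUP F \<in> {F. finite F \<and> F \<subseteq> S}. \<Sum>(m, l, n)\<in>F. ennreal (2 powr l))"

definition Lr_norm :: "real \<Rightarrow> (pt \<Rightarrow> complex) \<Rightarrow> ennreal" where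
  "Lr_norm r f = epow (\<integral>\<^sup>+ z. ennreal (cmod (f z) powr r) \<partial>omega) (1 / r)"

definition ell_r :: "real \<Rightarrow> (pt \<Rightarrow> complex) \<Rightarrow> pt set \<Rightarrow> ennreal" where
  "ell_r r f T = Lr_norm r (restr f T) / epow (nu T) (1 / r)"

definition Linf_nu :: "real \<Rightarrow> (pt \<Rightarrow> complex) \<Rightarrow> ennreal" where
  "Linf_nu r f = (SUP (m, l, n) \<in> UNIV. ell_r r f (tree m l n))"

definition level_nu :: "real \<Rightarrow> (pt \<Rightarrow> complex) \<Rightarrow> real \<Rightarrow> ennreal" where
  "level_nu r f t = (INF B \<in> {B. B \<in> sets omega \<and> Linf_nu r (restr f (Xsp - B)) \<le> ennreal t}. nu B)"

definition Lq_nu :: "real \<Rightarrow> real \<Rightarrow> (pt \<Rightarrow> complex) \<Rightarrow> ennreal" where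
  "Lq_nu q r f = epow (\<integral>\<^sup>+ t. indicator {0<..} t * ennreal (q * t powr (q - 1)) * level_nu r f t \<partial>lborel) (1 / q)"

definition ell_qr :: "real \<Rightarrow> real \<Rightarrow> (pt \<Rightarrow> complex) \<Rightarrow> pt set \<Rightarrow> ennreal" where
  "ell_qr q r f D = Lq_nu q r (restr f D) / epow (mu D) (1 / q)"

definition Linf_mu :: "real \<Rightarrow> real \<Rightarrow> (pt \<Rightarrow> complex) \<Rightarrow> ennreal" where
  "Linf_mu q r f = (SUP (m, l) \<in> UNIV. ell_qr q r f (strip m l))"

definition level_mu :: "real \<Rightarrow> real \<Rightarrow> (pt \<Rightarrow> complex) \<Rightarrow> real \<Rightarrow> ennreal" where
  "level_mu q r f t = (INF B \<in> {B. B \<in> sets omega \<and> Linf_mu q r (restr f (Xsp - B)) \<le> ennreal t}. mu B)"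

definition Lpqr :: "real \<Rightarrow> real \<Rightarrow> real \<Rightarrow> (pt \<Rightarrow> complex) \<Rightarrow> ennreal" where
  "Lpqr p q r f = epow (\<integral>\<^sup>+ t. indicator {0<..} t * ennreal (p * t powr (p - 1)) * level_mu q r f t \<partial>lborel) (1 / p)"

definition in_Lpqr :: "real \<Rightarrow> real \<Rightarrow> real \<Rightarrow> (pt \<Rightarrow> complex) \<Rightarrow> bool" where
  "in_Lpqr p q r f \<longleftrightarrow> f \<in> borel_measurable omega \<and> Lpqr p q r f < \<infinity>"

definition XJ :: "nat \<Rightarrow> pt set" where
  "XJ J = {2 ^ J * real J * (-1) <.. 2 ^ J * real J} \<times> {2 powr (- real J) <.. 2 ^ J}
          \<times> {2 ^ J * real J * (-1) <.. 2 ^ J * real J}"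

end

theory Submission
  imports Defs "HOL-Library.Diagonal_Subsequence"
begin

(* The quasi-norm decreases when f is restricted to a set, and it has a Fatou property: if
   measurable g n eventually agree with h at every point where h does not vanish, then
   ||h|| <= sup_n ||g n||.  Since the boxes X_J exhaust X, this gives
   ||f|| <= sup_J ||f 1_{X_J}||, and finiteness of ||f|| yields J with ||f|| <= 2 ||f 1_{X_J}||.
   The Fatou property passes through every layer of the construction: for L^r it is Fatou's
   lemma, for suprema over strips or trees it is immediate, and for outer L^p it reduces to
   the superlevel measures.  There near-optimal covers of the complements of the level sets
   are chosen for each g n, a diagonal subsequence makes them converge elementwise, and the
   limiting cover is admissible for h because every point lies in only finitely many strips
   or trees of bounded size. *)

lemma epow_mono: assumes "x \<le> y" "0 < a" shows "epow x a \<le> epow y a"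
proof (cases "y = \<infinity>")
  case True then show ?thesis by (simp add: epow_def)
next
  case False
  then have "x \<noteq> \<infinity>" using assms top.extremum_unique by fastforce
  moreover have "enn2real x \<le> enn2real y" using assms False by (simp add: enn2real_mono top.not_eq_extremum)
  ultimately show ?thesis using False assms
    by (simp add: epow_def ennreal_leI powr_mono2)
qed

lemma epow_epow_inverse: assumes "0 < p" shows "epow (epow x (1/p)) p = x"
proof (cases "x = \<infinity>")
  case True then show ?thesis by (simp add: epow_def)
next
  case False
  have "(enn2real x powr (1/p)) powr p = enn2real x"
    using assms by (simp add: powr_powr)
  then show ?thesis using False by (simp add: epow_def top.not_eq_extremum)
qed

lemma epow_inverse_le_iff: assumes "0 < p" shows "epow x (1/p) \<le> a \<longleftrightarrow> x \<le> epow a p"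
proof
  assume "epow x (1/p) \<le> a"
  then have "epow (epow x (1/p)) p \<le> epow a p" using assms epow_mono by blast
  then show "x \<le> epow a p" using epow_epow_inverse[OF assms] by simp
next
  assume "x \<le> epow a p"
  then have "epow x (1/p) \<le> epow (epow a p) (1/p)" using assms epow_mono by simp
  also have "epow (epow a p) (1/p) = a" using epow_epow_inverse[of "1/p" a] assms by simp
  finally show "epow x (1/p) \<le> a" .
qed

lemma epow_inverse_le_SUP:
  assumes "0 < p" "x \<le> (SUP n. y n)"
  shows "epow x (1/p) \<le> (SUP n. epow (y n) (1/p))"
proof -
  define s where "s = (SUP n. epow (y n) (1/p))"
  have "epow (y n) (1/p) \<le> s" for n
    unfolding s_def by (rule SUP_upper) simp
  then have "y n \<le> epow s p" for n
    using epow_inverse_le_iff[OF assms(1)] by simp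
  then have "x \<le> epow s p"
    using assms(2) by (meson SUP_least order.trans)
  then show ?thesis
    unfolding s_def[symmetric] using epow_inverse_le_iff[OF assms(1)] by simp
qed

lemma le_liminf_if_le_SUP_subseq:
  fixes X :: "nat \<Rightarrow> 'a::complete_linorder"
  assumes "\<And>r :: nat \<Rightarrow> nat. strict_mono r \<Longrightarrow> x \<le> (SUP k. X (r k))"
  shows "x \<le> liminf X"
proof (rule ccontr)
  assume "\<not> x \<le> liminf X"
  then obtain y where "y < x" and not_ev: "\<not> (\<forall>\<^sub>F n in sequentially. y < X n)"
    by (auto simp: le_Liminf_iff)
  obtain r :: "nat \<Rightarrow> nat" where r: "strict_mono r" "\<And>n. \<not> y < X (r n)"
    using not_eventually_sequentiallyD[OF not_ev] by blast
  then have "(SUP k. X (r k)) \<le> y" by (simp add: SUP_least not_less)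
  then show False using assms[OF r(1)] \<open>y < x\<close> by (meson leD order.trans)
qed

lemma liminf_le_SUP: "liminf (X :: nat \<Rightarrow> 'a::complete_lattice) \<le> (SUP n. X n)"
  unfolding liminf_SUP_INF by (rule SUP_mono) (auto intro: INF_lower2)

lemma bool_seq_constant_subseq:
  fixes X :: "nat \<Rightarrow> bool"
  obtains b and r :: "nat \<Rightarrow> nat" where "strict_mono r" "\<And>n. X (r n) = b"
proof -
  obtain b where "infinite {n. X n = b}"
  proof (cases "infinite {n. X n}")
    case True then show thesis using that[of True] by simp
  next
    case False then show thesis using that[of False] by simp
  qed
  from infinite_enumerate[OF this] obtain r :: "nat \<Rightarrow> nat"
    where "strict_mono r" "\<forall>n. r n \<in> {n. X n = b}"
    by blast
  then show thesis by (intro that[of r b]) auto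
qed

lemma eventually_eq_const_iff:
  assumes "\<forall>\<^sub>F n in sequentially. P n = b"
  shows "(\<forall>\<^sub>F n in sequentially. P n) \<longleftrightarrow> b"
  using eventually_subst[OF assms] by simp

lemma diagonal_subseq_sets:
  fixes S :: "nat \<Rightarrow> 'i::countable set"
  obtains \<phi> T where "strict_mono \<phi>" "\<And>i. \<forall>\<^sub>F n in sequentially. (i \<in> S (\<phi> n)) = (i \<in> T)"
proof -
  define P where "P k r \<longleftrightarrow> (\<exists>b. \<forall>\<^sub>F n in sequentially. (from_nat k \<in> S (r n)) = b)"
    for k and r :: "nat \<Rightarrow> nat"
  interpret subseqs P
  proof
    fix k and s :: "nat \<Rightarrow> nat"
    obtain b and r :: "nat \<Rightarrow> nat" where r: "strict_mono r" "\<And>n. (from_nat k \<in> S (s (r n))) = b"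
      using bool_seq_constant_subseq[of "\<lambda>n. from_nat k \<in> S (s n)"] by blast
    have "P k (s \<circ> r)"
      unfolding P_def o_def using r(2) by (intro exI[of _ b]) simp
    then show "\<exists>r'. strict_mono r' \<and> P k (s \<circ> r')"
      using r(1) by blast
  qed
  have P_diagseq: "P k diagseq" for k
  proof -
    have "P k (diagseq \<circ> ((+) (Suc k)))"
    proof (rule diagseq_holds)
      fix r s :: "nat \<Rightarrow> nat" and n
      assume "strict_mono r" "P n s"
      then show "P n (s \<circ> r)"
        unfolding P_def o_def by (auto dest: eventually_subseq)
    qed
    then obtain b where "\<forall>\<^sub>F n in sequentially. (from_nat k \<in> S (diagseq (Suc k + n))) = b"
      unfolding P_def o_def by blast
    then have "\<forall>\<^sub>F n in sequentially. (from_nat k \<in> S (diagseq n)) = b"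
      by (subst eventually_sequentially_seg[symmetric, of _ "Suc k"]) (simp add: add.commute)
    then show ?thesis unfolding P_def by blast
  qed
  define T where "T = {i. \<forall>\<^sub>F n in sequentially. i \<in> S (diagseq n)}"
  have "\<forall>\<^sub>F n in sequentially. (i \<in> S (diagseq n)) = (i \<in> T)" for i
  proof -
    obtain b where b: "\<forall>\<^sub>F n in sequentially. (i \<in> S (diagseq n)) = b"
      using P_diagseq[of "to_nat i"] unfolding P_def by auto
    then have "i \<in> T \<longleftrightarrow> b"
      unfolding T_def by (simp add: eventually_eq_const_iff)
    then show ?thesis using b by simp
  qed
  then show thesis using that subseq_diagseq by blast
qed

lemma ennreal_le_mult_SUP:
  fixes x :: ennreal and c :: real
  assumes "x < \<infinity>" "x \<le> (SUP J. y J)" "1 < c"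
  shows "\<exists>J. x \<le> ennreal c * y J"
proof (cases "x = 0")
  case True then show ?thesis by simp
next
  case False
  obtain v where x: "x = ennreal v" and "0 \<le> v"
    using assms(1) by (cases x) auto
  with False have "0 < v" by auto
  then have "v / c < v" using assms(3) by (simp add: divide_less_eq)
  then have "ennreal (v / c) < x" unfolding x using \<open>0 < v\<close> by (rule ennreal_lessI[rotated])
  then have "ennreal (v / c) < (SUP J. y J)" using assms(2) by (rule less_le_trans)
  then obtain J where J: "ennreal (v / c) < y J" by (auto simp: less_SUP_iff)
  have "x = ennreal c * ennreal (v / c)"
    unfolding x using \<open>0 \<le> v\<close> assms(3) by (simp add: ennreal_mult[symmetric])
  also have "\<dots> \<le> ennreal c * y J"
    using J by (intro mult_left_mono) auto
  finally show ?thesis ..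
qed

section \<open>Sizes with the Fatou property\<close>

definition subfunction :: "(pt \<Rightarrow> complex) \<Rightarrow> (pt \<Rightarrow> complex) \<Rightarrow> bool" where
  "subfunction g f \<longleftrightarrow> (\<forall>z. g z = 0 \<or> g z = f z)"

definition mono_size :: "((pt \<Rightarrow> complex) \<Rightarrow> ennreal) \<Rightarrow> bool" where
  "mono_size S \<longleftrightarrow> (\<forall>f g. subfunction g f \<longrightarrow> S g \<le> S f)"

(* Convergence in this sense, rather than monotone convergence, is what survives when each g n
   is restricted to the complement of its own cover. *)
definition eventually_extends :: "(nat \<Rightarrow> pt \<Rightarrow> complex) \<Rightarrow> (pt \<Rightarrow> complex) \<Rightarrow> bool" where
  "eventually_extends g h \<longleftrightarrow> (\<forall>n. g n \<in> borel_measurable omega) \<and>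
     (\<forall>z\<in>Xsp. h z = 0 \<or> (\<forall>\<^sub>F n in sequentially. g n z = h z))"

definition fatou_size :: "((pt \<Rightarrow> complex) \<Rightarrow> ennreal) \<Rightarrow> bool" where
  "fatou_size S \<longleftrightarrow> (\<forall>g h. eventually_extends g h \<longrightarrow> S h \<le> (SUP n. S (g n)))"

lemma mono_sizeD: "mono_size S \<Longrightarrow> subfunction g f \<Longrightarrow> S g \<le> S f"
  by (simp add: mono_size_def)

lemma fatou_sizeD: "fatou_size S \<Longrightarrow> eventually_extends g h \<Longrightarrow> S h \<le> (SUP n. S (g n))"
  by (simp add: fatou_size_def)

lemma subfunction_restr: "subfunction g f \<Longrightarrow> subfunction (restr g A) (restr f A)"
  by (auto simp: subfunction_def restr_def)

lemma subfunction_restr_self: "subfunction (restr f A) f"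
  by (auto simp: subfunction_def restr_def)

lemma subfunction_restr_mono: "A \<subseteq> B \<Longrightarrow> subfunction (restr f A) (restr f B)"
  by (auto simp: subfunction_def restr_def)

lemma Xsp_borel: "Xsp \<in> sets borel"
proof -
  have "Xsp = {z::pt. 0 < fst (snd z)}" by (auto simp: Xsp_def)
  also have "\<dots> \<in> sets borel"
    by (intro borel_open open_Collect_less continuous_intros)
  finally show ?thesis .
qed

lemma space_omega: "space omega = Xsp"
  by (simp add: omega_def)

lemma Int_Xsp_in_sets_omega: "A \<in> sets lebesgue \<Longrightarrow> A \<inter> Xsp \<in> sets omega"
  using Xsp_borel by (auto simp: omega_def sets_restrict_space_iff)

lemma restr_measurable:
  "g \<in> borel_measurable omega \<Longrightarrow> A \<in> sets lebesgue \<Longrightarrow> restr g A \<in> borel_measurable omega"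
  unfolding restr_def
  by (rule measurable_If_set) (auto simp: space_omega Int_Xsp_in_sets_omega Int_commute)

lemma eventually_extends_subseq:
  "eventually_extends g h \<Longrightarrow> strict_mono r \<Longrightarrow> eventually_extends (\<lambda>n. g (r n)) h"
  unfolding eventually_extends_def using eventually_subseq by blast

lemma eventually_extends_restr:
  "eventually_extends g h \<Longrightarrow> A \<in> sets lebesgue \<Longrightarrow> eventually_extends (\<lambda>n. restr (g n) A) (restr h A)"
  unfolding eventually_extends_def
  using restr_measurable by (auto simp: restr_def elim!: eventually_mono)

(* outer_level S om f t is the superlevel measure om(S(f) > t) of the paper, and outer_Lp S om p
   the outer L^p quasi-norm built from it. *)
definition outer_level ::
  "((pt \<Rightarrow> complex) \<Rightarrow> ennreal) \<Rightarrow> (pt set \<Rightarrow> ennreal) \<Rightarrow> (pt \<Rightarrow> complex) \<Rightarrow> real \<Rightarrow> ennreal" where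
  "outer_level S om f t = (INF B \<in> {B. B \<in> sets omega \<and> S (restr f (Xsp - B)) \<le> ennreal t}. om B)"

definition outer_Lp ::
  "((pt \<Rightarrow> complex) \<Rightarrow> ennreal) \<Rightarrow> (pt set \<Rightarrow> ennreal) \<Rightarrow> real \<Rightarrow> (pt \<Rightarrow> complex) \<Rightarrow> ennreal" where
  "outer_Lp S om p f =
     epow (\<integral>\<^sup>+ t. indicator {0<..} t * ennreal (p * t powr (p - 1)) * outer_level S om f t \<partial>lborel) (1 / p)"

lemma outer_level_mono:
  assumes "mono_size S" "subfunction g f"
  shows "outer_level S om g t \<le> outer_level S om f t"
  unfolding outer_level_def
proof (rule INF_mono)
  fix B assume "B \<in> {B. B \<in> sets omega \<and> S (restr f (Xsp - B)) \<le> ennreal t}"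
  moreover have "S (restr g (Xsp - B)) \<le> S (restr f (Xsp - B))"
    using assms by (blast intro: mono_sizeD subfunction_restr)
  ultimately show "\<exists>B'\<in>{B. B \<in> sets omega \<and> S (restr g (Xsp - B)) \<le> ennreal t}. om B' \<le> om B"
    by auto
qed

lemma outer_level_antimono:
  assumes "t \<le> t'"
  shows "outer_level S om f t' \<le> outer_level S om f t"
  unfolding outer_level_def
proof (rule INF_mono)
  fix B assume B: "B \<in> {B. B \<in> sets omega \<and> S (restr f (Xsp - B)) \<le> ennreal t}"
  have "ennreal t \<le> ennreal t'" using assms by (rule ennreal_leI)
  then show "\<exists>B'\<in>{B. B \<in> sets omega \<and> S (restr f (Xsp - B)) \<le> ennreal t'}. om B' \<le> om B"
    using B by (auto intro: order.trans)
qed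

lemma borel_measurable_antimono_ennreal:
  fixes F :: "real \<Rightarrow> ennreal"
  assumes "\<And>t t'. t \<le> t' \<Longrightarrow> F t' \<le> F t"
  shows "F \<in> borel_measurable borel"
proof (rule borel_measurableI_greater)
  fix y
  have "is_interval {x. y < F x}"
    unfolding is_interval_1 using assms by (auto intro: less_le_trans)
  then show "{x \<in> space borel. y < F x} \<in> sets borel"
    using real_interval_borel_measurable by simp
qed

lemma outer_level_measurable[measurable]: "outer_level S om f \<in> borel_measurable borel"
  by (rule borel_measurable_antimono_ennreal) (rule outer_level_antimono)

lemma outer_Lp_mono: assumes "0 < p" "mono_size S" shows "mono_size (outer_Lp S om p)"
  unfolding mono_size_def outer_Lp_def
proof (intro allI impI epow_mono)
  fix f g assume "subfunction g f"
  then show "(\<integral>\<^sup>+ t. indicator {0<..} t * ennreal (p * t powr (p - 1)) * outer_level S om g t \<partial>lborel)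
      \<le> (\<integral>\<^sup>+ t. indicator {0<..} t * ennreal (p * t powr (p - 1)) * outer_level S om f t \<partial>lborel)"
    by (intro nn_integral_mono mult_left_mono outer_level_mono[OF assms(2)]) auto
qed (use assms in auto)

lemma outer_Lp_fatou:
  assumes p: "0 < p"
    and level_fatou: "\<And>g h t. eventually_extends g h \<Longrightarrow>
      outer_level S om h t \<le> (SUP n. outer_level S om (g n) t)"
  shows "fatou_size (outer_Lp S om p)"
  unfolding fatou_size_def
proof (intro allI impI)
  fix g h assume ext: "eventually_extends g h"
  define w where "w t = indicator {0<..} t * ennreal (p * t powr (p - 1))" for t :: real
  define I where "I n = (\<integral>\<^sup>+ t. w t * outer_level S om (g n) t \<partial>lborel)" for n
  have "(\<integral>\<^sup>+ t. w t * outer_level S om h t \<partial>lborel)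
      \<le> (\<integral>\<^sup>+ t. liminf (\<lambda>n. w t * outer_level S om (g n) t) \<partial>lborel)"
  proof (intro nn_integral_mono le_liminf_if_le_SUP_subseq)
    fix t and r :: "nat \<Rightarrow> nat" assume "strict_mono r"
    then have "outer_level S om h t \<le> (SUP k. outer_level S om (g (r k)) t)"
      using level_fatou eventually_extends_subseq[OF ext] by blast
    then show "w t * outer_level S om h t \<le> (SUP k. w t * outer_level S om (g (r k)) t)"
      by (simp add: SUP_mult_left_ennreal[symmetric] mult_left_mono)
  qed
  also have "\<dots> \<le> liminf I"
    unfolding I_def by (rule nn_integral_liminf) (unfold w_def, measurable)
  also have "\<dots> \<le> (SUP n. I n)"
    by (rule liminf_le_SUP)
  finally show "outer_Lp S om p h \<le> (SUP n. outer_Lp S om p (g n))"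
    unfolding outer_Lp_def w_def[symmetric] I_def[symmetric] by (rule epow_inverse_le_SUP[OF p])
qed

definition outer_Linf ::
  "((pt \<Rightarrow> complex) \<Rightarrow> ennreal) \<Rightarrow> ('i \<Rightarrow> pt set) \<Rightarrow> ('i \<Rightarrow> ennreal) \<Rightarrow> (pt \<Rightarrow> complex) \<Rightarrow> ennreal" where
  "outer_Linf S E K f = (SUP j. S (restr f (E j)) / K j)"

lemma outer_Linf_mono: assumes "mono_size S" shows "mono_size (outer_Linf S E K)"
  unfolding mono_size_def outer_Linf_def
proof (intro allI impI SUP_mono)
  fix f g j assume "subfunction g f"
  then have "S (restr g (E j)) \<le> S (restr f (E j))"
    using assms by (blast intro: mono_sizeD subfunction_restr)
  then show "\<exists>j'\<in>UNIV. S (restr g (E j)) / K j \<le> S (restr f (E j')) / K j'"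
    unfolding divide_ennreal_def by (intro bexI[where x=j] mult_right_mono) auto
qed

lemma outer_Linf_fatou:
  assumes "fatou_size S" "\<And>j. E j \<in> sets lebesgue"
  shows "fatou_size (outer_Linf S E K)"
  unfolding fatou_size_def outer_Linf_def
proof (intro allI impI SUP_least)
  fix g h j assume ext: "eventually_extends g h"
  have "S (restr h (E j)) \<le> (SUP n. S (restr (g n) (E j)))"
    using fatou_sizeD[OF assms(1) eventually_extends_restr[OF ext assms(2)]] .
  then have "S (restr h (E j)) / K j \<le> (SUP n. S (restr (g n) (E j))) / K j"
    unfolding divide_ennreal_def by (rule mult_right_mono) simp
  also have "\<dots> = (SUP n. S (restr (g n) (E j)) / K j)"
    unfolding divide_ennreal_def by (rule SUP_mult_right_ennreal)
  also have "\<dots> \<le> (SUP n. SUP j. S (restr (g n) (E j)) / K j)"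
  proof (rule SUP_mono)
    fix n
    show "\<exists>m\<in>UNIV. S (restr (g n) (E j)) / K j \<le> (SUP j. S (restr (g m) (E j)) / K j)"
      by (rule bexI[where x=n]) (auto intro: SUP_upper)
  qed
  finally show "S (restr h (E j)) / K j \<le> (SUP n. SUP j. S (restr (g n) (E j)) / K j)" .
qed

lemma Lr_norm_mono: assumes "0 < r" shows "mono_size (Lr_norm r)"
  unfolding mono_size_def Lr_norm_def
proof (intro allI impI epow_mono)
  fix f g assume "subfunction g f"
  then have "cmod (g z) powr r \<le> cmod (f z) powr r" for z
    using assms unfolding subfunction_def by (metis norm_zero order_refl powr_0 powr_ge_zero)
  then show "(\<integral>\<^sup>+ z. ennreal (cmod (g z) powr r) \<partial>omega) \<le> (\<integral>\<^sup>+ z. ennreal (cmod (f z) powr r) \<partial>omega)"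
    by (intro nn_integral_mono ennreal_leI) auto
qed (use assms in auto)

lemma Lr_norm_fatou: assumes r: "0 < r" shows "fatou_size (Lr_norm r)"
  unfolding fatou_size_def
proof (intro allI impI)
  fix g h assume ext: "eventually_extends g h"
  define I where "I n = (\<integral>\<^sup>+ z. ennreal (cmod (g n z) powr r) \<partial>omega)" for n
  have "(\<integral>\<^sup>+ z. ennreal (cmod (h z) powr r) \<partial>omega)
      \<le> (\<integral>\<^sup>+ z. liminf (\<lambda>n. ennreal (cmod (g n z) powr r)) \<partial>omega)"
  proof (rule nn_integral_mono)
    fix z assume "z \<in> space omega"
    then have z: "z \<in> Xsp" by (simp add: space_omega)
    show "ennreal (cmod (h z) powr r) \<le> liminf (\<lambda>n. ennreal (cmod (g n z) powr r))"
    proof (cases "h z = 0")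
      case False
      then have "\<forall>\<^sub>F n in sequentially. g n z = h z"
        using ext z unfolding eventually_extends_def by blast
      then have "\<forall>\<^sub>F n in sequentially. ennreal (cmod (g n z) powr r) = ennreal (cmod (h z) powr r)"
        by (rule eventually_mono) simp
      then have "liminf (\<lambda>n. ennreal (cmod (g n z) powr r)) = ennreal (cmod (h z) powr r)"
        by (intro lim_imp_Liminf) (auto intro: tendsto_eventually)
      then show ?thesis by simp
    qed simp
  qed
  also have "\<dots> \<le> liminf I"
    unfolding I_def
  proof (rule nn_integral_liminf)
    fix n
    have "g n \<in> borel_measurable omega" using ext unfolding eventually_extends_def by blast
    then show "(\<lambda>z. ennreal (cmod (g n z) powr r)) \<in> borel_measurable omega" by measurable
  qed
  also have "\<dots> \<le> (SUP n. I n)"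
    by (rule liminf_le_SUP)
  finally show "Lr_norm r h \<le> (SUP n. Lr_norm r (g n))"
    unfolding Lr_norm_def I_def[symmetric] by (rule epow_inverse_le_SUP[OF r])
qed

section \<open>Outer measures generated by weighted coverings\<close>

definition total_weight :: "('i \<Rightarrow> ennreal) \<Rightarrow> 'i set \<Rightarrow> ennreal" where
  "total_weight w I = (SUP F \<in> {F. finite F \<and> F \<subseteq> I}. \<Sum>i\<in>F. w i)"

definition cover_measure :: "('i \<Rightarrow> pt set) \<Rightarrow> ('i \<Rightarrow> ennreal) \<Rightarrow> pt set \<Rightarrow> ennreal" where
  "cover_measure G w A = (INF I \<in> {I. A \<subseteq> (\<Union>i\<in>I. G i)}. total_weight w I)"

definition locally_finite_cover :: "('i \<Rightarrow> pt set) \<Rightarrow> ('i \<Rightarrow> ennreal) \<Rightarrow> bool" where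
  "locally_finite_cover G w \<longleftrightarrow> (\<forall>z\<in>Xsp. \<forall>a. finite {i. z \<in> G i \<and> w i \<le> ennreal a})"

lemma total_weight_single: "i \<in> I \<Longrightarrow> w i \<le> total_weight w I"
  unfolding total_weight_def by (rule SUP_upper2[of "{i}"]) auto

lemma total_weight_limit_le:
  assumes lim: "\<And>i. \<forall>\<^sub>F n in sequentially. (i \<in> I n) = (i \<in> T)"
    and bound: "\<And>n. total_weight w (I n) \<le> a"
  shows "total_weight w T \<le> a"
  unfolding total_weight_def
proof (rule SUP_least)
  fix F assume F: "F \<in> {F. finite F \<and> F \<subseteq> T}"
  then have "\<forall>\<^sub>F n in sequentially. \<forall>i\<in>F. (i \<in> I n) = (i \<in> T)"
    using lim by (intro eventually_ball_finite) auto
  then obtain n where "\<forall>i\<in>F. (i \<in> I n) = (i \<in> T)"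
    unfolding eventually_sequentially by blast
  then have "F \<subseteq> I n" using F by auto
  then have "(\<Sum>i\<in>F. w i) \<le> total_weight w (I n)"
    unfolding total_weight_def using F by (intro SUP_upper) auto
  then show "(\<Sum>i\<in>F. w i) \<le> a" using bound order.trans by blast
qed

lemma outer_level_less_obtains_cover:
  assumes "mono_size S" "outer_level S (cover_measure G w) f t < a"
  obtains I where "S (restr f (Xsp - (\<Union>i\<in>I. G i))) \<le> ennreal t" "total_weight w I < a"
proof -
  obtain B where B: "B \<in> sets omega" "S (restr f (Xsp - B)) \<le> ennreal t" "cover_measure G w B < a"
    using assms(2) unfolding outer_level_def by (auto simp: INF_less_iff)
  then obtain I where I: "B \<subseteq> (\<Union>i\<in>I. G i)" "total_weight w I < a"
    unfolding cover_measure_def by (auto simp: INF_less_iff)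
  then have "S (restr f (Xsp - (\<Union>i\<in>I. G i))) \<le> S (restr f (Xsp - B))"
    by (intro mono_sizeD[OF assms(1)] subfunction_restr_mono) auto
  then show thesis using that B(2) I(2) order.trans by blast
qed

lemma outer_level_le_total_weight:
  fixes G :: "'i::countable \<Rightarrow> pt set"
  assumes "S (restr f (Xsp - (\<Union>i\<in>I. G i))) \<le> ennreal t" "\<And>i. G i \<in> sets lebesgue"
  shows "outer_level S (cover_measure G w) f t \<le> total_weight w I"
proof -
  have "Xsp - (\<Union>i\<in>I. G i) \<inter> Xsp = Xsp - (\<Union>i\<in>I. G i)" by blast
  moreover have "(\<Union>i\<in>I. G i) \<inter> Xsp \<in> sets omega"
    using assms(2) by (intro Int_Xsp_in_sets_omega sets.countable_UN') auto
  ultimately have "outer_level S (cover_measure G w) f t \<le> cover_measure G w ((\<Union>i\<in>I. G i) \<inter> Xsp)"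
    using assms(1) unfolding outer_level_def by (intro INF_lower) auto
  also have "\<dots> \<le> total_weight w I"
    unfolding cover_measure_def by (rule INF_lower) auto
  finally show ?thesis .
qed

lemma eventually_extends_restr_uncovered:
  fixes G :: "'i::countable \<Rightarrow> pt set"
  assumes ext: "eventually_extends g h"
    and G: "\<And>i. G i \<in> sets lebesgue"
    and fin: "locally_finite_cover G w"
    and lim: "\<And>i. \<forall>\<^sub>F n in sequentially. (i \<in> I n) = (i \<in> T)"
    and bound: "\<And>n. total_weight w (I n) \<le> ennreal a"
  shows "eventually_extends (\<lambda>n. restr (g n) (Xsp - (\<Union>i\<in>I n. G i))) (restr h (Xsp - (\<Union>i\<in>T. G i)))"
  unfolding eventually_extends_def
proof (intro conjI allI ballI)
  fix n
  have "Xsp - (\<Union>i\<in>I n. G i) \<in> sets lebesgue"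
    using Xsp_borel G by (intro sets.Diff sets.countable_UN') auto
  then show "restr (g n) (Xsp - (\<Union>i\<in>I n. G i)) \<in> borel_measurable omega"
    using ext unfolding eventually_extends_def by (blast intro: restr_measurable)
next
  fix z assume z: "z \<in> Xsp"
  show "restr h (Xsp - (\<Union>i\<in>T. G i)) z = 0 \<or>
    (\<forall>\<^sub>F n in sequentially. restr (g n) (Xsp - (\<Union>i\<in>I n. G i)) z = restr h (Xsp - (\<Union>i\<in>T. G i)) z)"
  proof (cases "restr h (Xsp - (\<Union>i\<in>T. G i)) z = 0")
    case False
    then have "h z \<noteq> 0" and zT: "z \<notin> (\<Union>i\<in>T. G i)"
      by (auto simp: restr_def split: if_splits)
    then have ev_g: "\<forall>\<^sub>F n in sequentially. g n z = h z"
      using ext z unfolding eventually_extends_def by blast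
    define K where "K = {i. z \<in> G i \<and> w i \<le> ennreal a}"
    have "finite K" unfolding K_def using fin z unfolding locally_finite_cover_def by blast
    then have ev_K: "\<forall>\<^sub>F n in sequentially. \<forall>i\<in>K. (i \<in> I n) = (i \<in> T)"
      using lim by (intro eventually_ball_finite) auto
    have "\<forall>\<^sub>F n in sequentially.
        restr (g n) (Xsp - (\<Union>i\<in>I n. G i)) z = restr h (Xsp - (\<Union>i\<in>T. G i)) z"
      using ev_g ev_K
    proof eventually_elim
      case (elim n)
      have "z \<notin> G i" if "i \<in> I n" for i
      proof
        assume "z \<in> G i"
        moreover have "w i \<le> ennreal a"
          using total_weight_single[OF that] bound order.trans by blast
        ultimately have "i \<in> T" using elim(2) that unfolding K_def by blast
        then show False using zT \<open>z \<in> G i\<close> by blast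
      qed
      then show ?case using elim(1) z zT by (auto simp: restr_def)
    qed
    then show ?thesis by blast
  qed simp
qed

lemma outer_level_cover_fatou:
  fixes G :: "'i::countable \<Rightarrow> pt set"
  assumes mono: "mono_size S" and fatou: "fatou_size S"
    and G: "\<And>i. G i \<in> sets lebesgue" and fin: "locally_finite_cover G w"
    and ext: "eventually_extends g h"
  shows "outer_level S (cover_measure G w) h t \<le> (SUP n. outer_level S (cover_measure G w) (g n) t)"
proof (rule dense_ge)
  fix a' assume less: "(SUP n. outer_level S (cover_measure G w) (g n) t) < a'"
  show "outer_level S (cover_measure G w) h t \<le> a'"
  proof (cases "a' = \<infinity>")
    case False
    then obtain a where a: "a' = ennreal a" by (cases a') auto
    have "\<exists>I. S (restr (g n) (Xsp - (\<Union>i\<in>I. G i))) \<le> ennreal t \<and> total_weight w I < a'" for n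
    proof -
      have "outer_level S (cover_measure G w) (g n) t < a'"
        using less by (meson SUP_upper UNIV_I le_less_trans)
      then obtain I where "S (restr (g n) (Xsp - (\<Union>i\<in>I. G i))) \<le> ennreal t" "total_weight w I < a'"
        by (rule outer_level_less_obtains_cover[OF mono])
      then show ?thesis by blast
    qed
    then obtain I where I: "\<And>n. S (restr (g n) (Xsp - (\<Union>i\<in>I n. G i))) \<le> ennreal t"
      "\<And>n. total_weight w (I n) < a'"
      by metis
    obtain \<phi> T where \<phi>: "strict_mono \<phi>" and T: "\<And>i. \<forall>\<^sub>F n in sequentially. (i \<in> I (\<phi> n)) = (i \<in> T)"
      using diagonal_subseq_sets[of I] by blast
    have weight_T: "total_weight w T \<le> a'"
      using T by (rule total_weight_limit_le) (rule less_imp_le[OF I(2)])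
    have "eventually_extends (\<lambda>n. restr (g (\<phi> n)) (Xsp - (\<Union>i\<in>I (\<phi> n). G i)))
        (restr h (Xsp - (\<Union>i\<in>T. G i)))"
      using eventually_extends_subseq[OF ext \<phi>] G fin T
      by (rule eventually_extends_restr_uncovered[where a = a]) (use I(2) a in \<open>simp add: less_imp_le\<close>)
    then have "S (restr h (Xsp - (\<Union>i\<in>T. G i)))
        \<le> (SUP n. S (restr (g (\<phi> n)) (Xsp - (\<Union>i\<in>I (\<phi> n). G i))))"
      by (rule fatou_sizeD[OF fatou])
    also have "\<dots> \<le> ennreal t"
      using I(1) by (rule SUP_least)
    finally have "outer_level S (cover_measure G w) h t \<le> total_weight w T"
      using G by (rule outer_level_le_total_weight)
    then show ?thesis using weight_T by simp
  qed simp
qed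

section \<open>Strips, trees and the boxes X_J\<close>

lemma borel_measurable_pt_components[measurable]:
  "(\<lambda>z::pt. fst z) \<in> borel_measurable borel"
  "(\<lambda>z::pt. fst (snd z)) \<in> borel_measurable borel"
  "(\<lambda>z::pt. snd (snd z)) \<in> borel_measurable borel"
  by (intro borel_measurable_continuous_onI continuous_intros)+

lemma dI_borel[measurable]: "dI m l \<in> sets borel"
  by (simp add: dI_def)

lemma tile_borel: "tile m l n \<in> sets borel"
proof -
  have "tile m l n = {z::pt. fst z \<in> dI m l \<and> fst (snd z) \<in> {2 powr (l - 1) <.. 2 powr l}
      \<and> snd (snd z) \<in> dI n (- l)}"
    by (auto simp: tile_def)
  also have "\<dots> \<in> sets borel" by measurable
  finally show ?thesis .
qed

lemma strip_borel: "strip m l \<in> sets borel"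
proof -
  have "strip m l = {z::pt. fst z \<in> dI m l \<and> 0 < fst (snd z) \<and> fst (snd z) \<le> 2 powr l}"
    by (auto simp: strip_def)
  also have "\<dots> \<in> sets borel" by measurable
  finally show ?thesis .
qed

lemma tree_borel: "tree m l n \<in> sets borel"
proof -
  have "tree m l n = (\<Union>(m', l')\<in>{(m', l'). l' \<le> l \<and> dI m' l' \<subseteq> dI m l}. tile m' l' (Nidx n l l'))"
    by (auto simp: tree_def)
  also have "\<dots> \<in> sets borel"
    by (rule sets.countable_UN') (auto intro: tile_borel)
  finally show ?thesis .
qed

lemma XJ_borel: "XJ J \<in> sets borel"
proof -
  have "XJ J = {z::pt. fst z \<in> {2 ^ J * real J * (-1) <.. 2 ^ J * real J}
      \<and> fst (snd z) \<in> {2 powr (- real J) <.. 2 ^ J} \<and> snd (snd z) \<in> {2 ^ J * real J * (-1) <.. 2 ^ J * real J}}"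
    by (auto simp: XJ_def)
  also have "\<dots> \<in> sets borel" by measurable
  finally show ?thesis .
qed

lemma dI_index: assumes "x \<in> dI m l" shows "m = \<lceil>x / 2 powr l\<rceil> - 1"
proof -
  have p: "0 < 2 powr (real_of_int l)" by simp
  have "2 powr l * m < x" "x \<le> 2 powr l * (m + 1)" using assms by (auto simp: dI_def)
  then have "real_of_int (m + 1) - 1 < x / 2 powr l" "x / 2 powr l \<le> real_of_int (m + 1)"
    using p by (auto simp: field_simps)
  then have "\<lceil>x / 2 powr l\<rceil> = m + 1" by (rule ceiling_unique)
  then show ?thesis by simp
qed

lemma floor_log_le_if_le_powr:
  assumes "0 < s" "s \<le> 2 powr (real_of_int l)" shows "\<lfloor>log 2 s\<rfloor> \<le> l"
proof -
  have "log 2 s \<le> l" using assms by (simp add: log_le_iff)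
  then show ?thesis by linarith
qed

lemma le_ceiling_log_if_powr_le:
  assumes "ennreal (2 powr (real_of_int l)) \<le> ennreal a" shows "l \<le> \<lceil>log 2 a\<rceil>"
proof -
  have pos: "0 < 2 powr (real_of_int l)" by simp
  then have le: "2 powr l \<le> a"
    using assms by (simp add: ennreal_le_iff2)
  then have "0 < a" using pos by linarith
  with le have "l \<le> log 2 a" by (simp add: le_log_iff)
  then show ?thesis by linarith
qed

lemma finite_int_div_eq:
  fixes d c :: int assumes "0 < d" shows "finite {n. n div d = c}"
proof (rule finite_subset)
  show "{n. n div d = c} \<subseteq> {c * d .. c * d + d}"
    using div_mult_mod_eq pos_mod_sign[OF assms] pos_mod_bound[OF assms]
    by (smt (verit) atLeastAtMost_iff mem_Collect_eq subsetI)
qed simp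

lemma locally_finite_strips:
  "locally_finite_cover (\<lambda>(m, l). strip m l) (\<lambda>(m::int, l::int). ennreal (2 powr l))"
  unfolding locally_finite_cover_def
proof (intro ballI allI)
  fix z a assume "z \<in> Xsp"
  then obtain x s \<xi> where z: "z = (x, s, \<xi>)" and s: "0 < s" by (auto simp: Xsp_def)
  have "{i. z \<in> (\<lambda>(m, l). strip m l) i \<and> (\<lambda>(m::int, l::int). ennreal (2 powr l)) i \<le> ennreal a}
      \<subseteq> (\<lambda>l. (\<lceil>x / 2 powr l\<rceil> - 1, l)) ` {\<lfloor>log 2 s\<rfloor> .. \<lceil>log 2 a\<rceil>}" (is "?L \<subseteq> ?R")
  proof
    fix i assume i: "i \<in> ?L"
    obtain m l where ml: "i = (m, l)" by (cases i) auto
    have x: "x \<in> dI m l" and "s \<le> 2 powr l" and a: "ennreal (2 powr l) \<le> ennreal a"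
      using i ml z by (auto simp: strip_def)
    then show "i \<in> ?R"
      unfolding ml using dI_index[OF x] floor_log_le_if_le_powr[OF s] le_ceiling_log_if_powr_le[OF a]
      by auto
  qed
  then show "finite ?L" by (rule finite_subset) auto
qed

lemma mem_tree_indices:
  assumes "(x, s, \<xi>) \<in> tree m l n"
  obtains l' where "l' \<le> l" "m = \<lceil>x / 2 powr l\<rceil> - 1" "2 powr real_of_int (l' - 1) < s" "s \<le> 2 powr l'"
    "n div 2 ^ nat (l - l') = \<lceil>\<xi> / 2 powr real_of_int (- l')\<rceil> - 1"
proof -
  obtain m' l' where "l' \<le> l" "dI m' l' \<subseteq> dI m l" "(x, s, \<xi>) \<in> tile m' l' (Nidx n l l')"
    using assms unfolding tree_def by blast
  then have "l' \<le> l" "x \<in> dI m l" "2 powr real_of_int (l' - 1) < s" "s \<le> 2 powr l'"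
    "\<xi> \<in> dI (Nidx n l l') (- l')"
    by (auto simp: tile_def)
  then show thesis
    using that dI_index[of x m l] dI_index[of \<xi> "Nidx n l l'" "- l'"] by (simp add: Nidx_def)
qed

lemma locally_finite_trees:
  "locally_finite_cover (\<lambda>(m, l, n). tree m l n) (\<lambda>(m::int, l::int, n::int). ennreal (2 powr l))"
  unfolding locally_finite_cover_def
proof (intro ballI allI)
  fix z a assume "z \<in> Xsp"
  then obtain x s \<xi> where z: "z = (x, s, \<xi>)" and s: "0 < s" by (auto simp: Xsp_def)
  define L0 where "L0 = \<lfloor>log 2 s\<rfloor>"
  define L1 where "L1 = \<lceil>log 2 a\<rceil>"
  let ?idx = "\<lambda>l l'. {\<lceil>x / 2 powr l\<rceil> - 1} \<times> {l} \<times> {n. n div 2 ^ nat (l - l') = \<lceil>\<xi> / 2 powr real_of_int (- l')\<rceil> - 1}"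
  have "{i. z \<in> (\<lambda>(m, l, n). tree m l n) i \<and> (\<lambda>(m::int, l::int, n::int). ennreal (2 powr l)) i \<le> ennreal a}
      \<subseteq> (\<Union>l\<in>{L0 .. L1}. \<Union>l'\<in>{L0 .. L0 + 1}. ?idx l l')" (is "?L \<subseteq> ?R")
  proof
    fix i assume i: "i \<in> ?L"
    obtain m l n where mln: "i = (m, l, n)" by (cases i) auto
    have t: "(x, s, \<xi>) \<in> tree m l n" and a: "ennreal (2 powr l) \<le> ennreal a"
      using i mln z by auto
    obtain l' where l': "l' \<le> l" "m = \<lceil>x / 2 powr l\<rceil> - 1" "2 powr real_of_int (l' - 1) < s" "s \<le> 2 powr l'"
      "n div 2 ^ nat (l - l') = \<lceil>\<xi> / 2 powr real_of_int (- l')\<rceil> - 1"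
      using t by (rule mem_tree_indices)
    have "L0 \<le> l'" unfolding L0_def using floor_log_le_if_le_powr[OF s l'(4)] .
    have "real_of_int (l' - 1) < log 2 s"
      using l'(3) s by (simp add: less_log_iff)
    then have "l' \<le> L0 + 1" unfolding L0_def by linarith
    have "l \<le> L1" unfolding L1_def using le_ceiling_log_if_powr_le[OF a] .
    then show "i \<in> ?R" using mln l' \<open>L0 \<le> l'\<close> \<open>l' \<le> L0 + 1\<close> by auto
  qed
  moreover have "finite ?R"
    by (intro finite_UN_I finite_cartesian_product finite_int_div_eq) auto
  ultimately show "finite ?L" by (rule finite_subset)
qed

lemma eventually_mem_XJ: assumes "z \<in> Xsp" shows "\<forall>\<^sub>F J in sequentially. z \<in> XJ J"
proof -
  obtain x s \<xi> where z: "z = (x, s, \<xi>)" and s: "0 < s" using assms by (auto simp: Xsp_def)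
  obtain N :: nat where N: "max (max (\<bar>x\<bar> + 1) (\<bar>\<xi>\<bar> + 1)) (max s (1 / s)) < real N"
    using reals_Archimedean2 by blast
  have "z \<in> XJ J" if "N \<le> J" for J
  proof -
    have "J < 2 ^ J" by (rule less_exp)
    then have J2: "real J < 2 ^ J" by (metis of_nat_less_iff of_nat_numeral of_nat_power)
    have NJ: "real N \<le> real J" using that by simp
    have "real J \<le> 2 ^ J * real J" using J2 by (simp add: mult_le_cancel_right1 less_imp_le)
    then have x_xi: "\<bar>x\<bar> < 2 ^ J * real J" "\<bar>\<xi>\<bar> < 2 ^ J * real J" using N NJ by auto
    have "s < real N" "1 / s < real N" using N by auto
    then have s_upper: "s < 2 ^ J" and "1 / s < 2 ^ J" using NJ J2 by linarith+
    from \<open>1 / s < 2 ^ J\<close> have "1 / 2 ^ J < s" using s by (simp add: field_simps)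
    then have "2 powr (- real J) < s" by (simp add: powr_minus powr_realpow divide_inverse)
    then show ?thesis using x_xi s_upper unfolding z XJ_def by auto
  qed
  then show ?thesis unfolding eventually_sequentially by blast
qed

section \<open>The iterated outer quasi-norm\<close>

lemma mu_eq_cover_measure: "mu = cover_measure (\<lambda>(m, l). strip m l) (\<lambda>(m::int, l::int). ennreal (2 powr l))"
  by (rule ext) (simp add: mu_def cover_measure_def total_weight_def)

lemma nu_eq_cover_measure:
  "nu = cover_measure (\<lambda>(m, l, n). tree m l n) (\<lambda>(m::int, l::int, n::int). ennreal (2 powr l))"
  by (rule ext) (simp add: nu_def cover_measure_def total_weight_def)

lemma Linf_nu_eq_outer_Linf:
  "Linf_nu r = outer_Linf (Lr_norm r) (\<lambda>(m, l, n). tree m l n) (\<lambda>(m, l, n). epow (nu (tree m l n)) (1 / r))"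
  by (rule ext) (auto simp: Linf_nu_def outer_Linf_def ell_r_def split: prod.splits intro!: SUP_cong)

lemma Lq_nu_eq_outer_Lp: "Lq_nu q r = outer_Lp (Linf_nu r) nu q"
  by (rule ext) (simp add: Lq_nu_def outer_Lp_def outer_level_def level_nu_def)

lemma Linf_mu_eq_outer_Linf:
  "Linf_mu q r = outer_Linf (Lq_nu q r) (\<lambda>(m, l). strip m l) (\<lambda>(m, l). epow (mu (strip m l)) (1 / q))"
  by (rule ext) (auto simp: Linf_mu_def outer_Linf_def ell_qr_def split: prod.splits intro!: SUP_cong)

lemma Lpqr_eq_outer_Lp: "Lpqr p q r = outer_Lp (Linf_mu q r) mu p"
  by (rule ext) (simp add: Lpqr_def outer_Lp_def outer_level_def level_mu_def)

lemma Linf_nu_mono: "0 < r \<Longrightarrow> mono_size (Linf_nu r)"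
  unfolding Linf_nu_eq_outer_Linf by (intro outer_Linf_mono Lr_norm_mono)

lemma Linf_nu_fatou: "0 < r \<Longrightarrow> fatou_size (Linf_nu r)"
  unfolding Linf_nu_eq_outer_Linf using tree_borel by (intro outer_Linf_fatou Lr_norm_fatou) auto

lemma Lq_nu_mono: "0 < q \<Longrightarrow> 0 < r \<Longrightarrow> mono_size (Lq_nu q r)"
  unfolding Lq_nu_eq_outer_Lp by (intro outer_Lp_mono Linf_nu_mono)

lemma Lq_nu_fatou: "0 < q \<Longrightarrow> 0 < r \<Longrightarrow> fatou_size (Lq_nu q r)"
  unfolding Lq_nu_eq_outer_Lp nu_eq_cover_measure using tree_borel
  by (intro outer_Lp_fatou outer_level_cover_fatou Linf_nu_mono Linf_nu_fatou locally_finite_trees) auto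

lemma Linf_mu_mono: "0 < q \<Longrightarrow> 0 < r \<Longrightarrow> mono_size (Linf_mu q r)"
  unfolding Linf_mu_eq_outer_Linf by (intro outer_Linf_mono Lq_nu_mono)

lemma Linf_mu_fatou: "0 < q \<Longrightarrow> 0 < r \<Longrightarrow> fatou_size (Linf_mu q r)"
  unfolding Linf_mu_eq_outer_Linf using strip_borel by (intro outer_Linf_fatou Lq_nu_fatou) auto

lemma Lpqr_mono: "0 < p \<Longrightarrow> 0 < q \<Longrightarrow> 0 < r \<Longrightarrow> mono_size (Lpqr p q r)"
  unfolding Lpqr_eq_outer_Lp by (intro outer_Lp_mono Linf_mu_mono)

lemma Lpqr_fatou: "0 < p \<Longrightarrow> 0 < q \<Longrightarrow> 0 < r \<Longrightarrow> fatou_size (Lpqr p q r)"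
  unfolding Lpqr_eq_outer_Lp mu_eq_cover_measure using strip_borel
  by (intro outer_Lp_fatou outer_level_cover_fatou Linf_mu_mono Linf_mu_fatou locally_finite_strips) auto

lemma eventually_extends_restr_XJ:
  assumes "f \<in> borel_measurable omega"
  shows "eventually_extends (\<lambda>J. restr f (XJ J)) f"
  unfolding eventually_extends_def
proof (intro conjI allI ballI disjI2)
  fix J show "restr f (XJ J) \<in> borel_measurable omega"
    using assms XJ_borel by (auto intro: restr_measurable)
next
  fix z assume "z \<in> Xsp"
  then show "\<forall>\<^sub>F J in sequentially. restr f (XJ J) z = f z"
    by (rule eventually_mono[OF eventually_mem_XJ]) (simp add: restr_def)
qed

theorem lemma5p5:
  shows "\<forall>p q r :: real. 0 < p \<and> 0 < q \<and> 0 < r \<longrightarrow>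
    (\<exists>C :: real. \<forall>f :: pt \<Rightarrow> complex. in_Lpqr p q r f \<longrightarrow>
      (\<exists>J :: nat. Lpqr p q r (restr f (XJ J)) \<le> Lpqr p q r f \<and>
                  Lpqr p q r f \<le> ennreal C * Lpqr p q r (restr f (XJ J))))"
proof (intro allI impI)
  fix p q r :: real assume "0 < p \<and> 0 < q \<and> 0 < r"
  then have mono: "mono_size (Lpqr p q r)" and fatou: "fatou_size (Lpqr p q r)"
    by (simp_all add: Lpqr_mono Lpqr_fatou)
  have "\<exists>J. Lpqr p q r (restr f (XJ J)) \<le> Lpqr p q r f \<and>
      Lpqr p q r f \<le> ennreal 2 * Lpqr p q r (restr f (XJ J))" if f: "in_Lpqr p q r f" for f
  proof -
    have meas: "f \<in> borel_measurable omega" and fin: "Lpqr p q r f < \<infinity>"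
      using f by (auto simp: in_Lpqr_def)
    have "Lpqr p q r f \<le> (SUP J. Lpqr p q r (restr f (XJ J)))"
      by (rule fatou_sizeD[OF fatou eventually_extends_restr_XJ[OF meas]])
    then obtain J where "Lpqr p q r f \<le> ennreal 2 * Lpqr p q r (restr f (XJ J))"
      using ennreal_le_mult_SUP[OF fin, of _ 2] by auto
    moreover have "Lpqr p q r (restr f (XJ J)) \<le> Lpqr p q r f"
      by (rule mono_sizeD[OF mono subfunction_restr_self])
    ultimately show ?thesis by blast
  qed
  then show "\<exists>C. \<forall>f. in_Lpqr p q r f \<longrightarrow> (\<exists>J. Lpqr p q r (restr f (XJ J)) \<le> Lpqr p q r f \<and>
      Lpqr p q r f \<le> ennreal C * Lpqr p q r (restr f (XJ J)))"
    by blast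
qed

end
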